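(* Let $\mathcal{A}$ be a $\sigma$-algebra on a set $X$ and let $\mathcal{F},\mathcal{G}$ be $\sigma$-algebras on a set $U$. The following are equivalent: (i) $(\mathcal{A}\otimes\mathcal{F})\cap(\mathcal{A}\otimes\mathcal{G})=\mathcal{A}\otimes(\mathcal{F}\cap\mathcal{G})$; (ii) there exist a $\sigma$-algebra $\mathcal{A}_0$ on $X$ and a $\sigma$-algebra $\mathcal{E}$ on $U$ such that $(\mathcal{A}\otimes\mathcal{F})\cap(\mathcal{A}\otimes\mathcal{G})=\mathcal{A}_0\otimes\mathcal{E}$.
   Context: For $\sigma$-algebras $\mathcal{A}$ on $X$ and $\mathcal{F}$ on $U$, $\mathcal{A}\otimes\mathcal{F}$ denotes the product $\sigma$-algebra on $X\times U$, i.e. the smallest $\sigma$-algebra containing all rectangles $A\times F$ with $A\in\mathcal{A}$, $F\in\mathcal{F}$. *)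

theory Defs
  imports "HOL-Analysis.Analysis"
begin

definition prod_sigma :: "'a set \<Rightarrow> 'b set \<Rightarrow> 'a set set \<Rightarrow> 'b set set \<Rightarrow> ('a \<times> 'b) set set" where
  "prod_sigma X U A F = sigma_sets (X \<times> U) {a \<times> f | a f. a \<in> A \<and> f \<in> F}"

end

theory Submission
  imports Defs
begin

text \<open>Every sigma-algebra of the form \<open>A\<^sub>0 \<otimes> E\<close> is generated by its rectangles, and the
sections of a nonempty rectangle \<open>a \<times> e\<close> are its sides. So if
\<open>(A \<otimes> F) \<inter> (A \<otimes> G) = A\<^sub>0 \<otimes> E\<close>, each nonempty generating rectangle \<open>a \<times> e\<close> lies in
\<open>A \<otimes> F\<close> and in \<open>A \<otimes> G\<close>, whence \<open>a \<in> A\<close> and \<open>e \<in> F \<inter> G\<close>; thus \<open>A\<^sub>0 \<otimes> E \<subseteq> A \<otimes> (F \<inter> G)\<close>.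
The reverse inclusion \<open>A \<otimes> (F \<inter> G) \<subseteq> (A \<otimes> F) \<inter> (A \<otimes> G)\<close> is monotonicity.\<close>

lemma sigma_algebra_Int:
  "sigma_algebra \<Omega> F \<Longrightarrow> sigma_algebra \<Omega> G \<Longrightarrow> sigma_algebra \<Omega> (F \<inter> G)"
  unfolding sigma_algebra_iff2 by (auto simp: subset_eq)

lemma sigma_algebra_prod_sigma:
  "A \<subseteq> Pow X \<Longrightarrow> F \<subseteq> Pow U \<Longrightarrow> sigma_algebra (X \<times> U) (prod_sigma X U A F)"
  unfolding prod_sigma_def by (rule sigma_algebra_sigma_sets) auto

lemma prod_sigma_mono: "F \<subseteq> G \<Longrightarrow> prod_sigma X U A F \<subseteq> prod_sigma X U A G"
  unfolding prod_sigma_def by (rule sigma_sets_mono') blast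

lemma prod_sigma_eq_sets_pair_measure:
  assumes "sigma_algebra X A" "sigma_algebra U F"
  shows "prod_sigma X U A F = sets (sigma X A \<Otimes>\<^sub>M sigma U F)"
  using assms
  by (simp add: prod_sigma_def sets_pair_measure sigma_algebra.sigma_sets_eq sigma_algebra_iff2)

lemma prod_sigma_subset:
  assumes "sigma_algebra X A" "sigma_algebra U F" "S \<in> prod_sigma X U A F"
  shows "S \<subseteq> X \<times> U"
  using assms unfolding prod_sigma_def
  by (elim sigma_sets_into_sp[rotated]) (auto simp: sigma_algebra_iff2)

lemma prod_sigma_section_fst:
  assumes "sigma_algebra X A" "sigma_algebra U F" "S \<in> prod_sigma X U A F" "x \<in> X"
  shows "{u. (x, u) \<in> S} \<in> F"
proof -
  have "Pair x \<in> measurable (sigma U F) (sigma X A \<Otimes>\<^sub>M sigma U F)"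
    using assms(1,4) by (intro measurable_Pair1') (simp add: sigma_algebra_iff2)
  then have "Pair x -` S \<inter> U \<in> F"
    using assms by (simp add: measurable_def prod_sigma_eq_sets_pair_measure
        sigma_algebra.sets_measure_of_eq space_measure_of_conv)
  moreover have "Pair x -` S \<inter> U = {u. (x, u) \<in> S}"
    using prod_sigma_subset[OF assms(1-3)] by auto
  ultimately show ?thesis by simp
qed

lemma prod_sigma_section_snd:
  assumes "sigma_algebra X A" "sigma_algebra U F" "S \<in> prod_sigma X U A F" "u \<in> U"
  shows "{x. (x, u) \<in> S} \<in> A"
proof -
  have "(\<lambda>x. (x, u)) \<in> measurable (sigma X A) (sigma X A \<Otimes>\<^sub>M sigma U F)"
    using assms(2,4) by (intro measurable_Pair2') (simp add: sigma_algebra_iff2)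
  then have "(\<lambda>x. (x, u)) -` S \<inter> X \<in> A"
    using assms by (simp add: measurable_def prod_sigma_eq_sets_pair_measure
        sigma_algebra.sets_measure_of_eq space_measure_of_conv)
  moreover have "(\<lambda>x. (x, u)) -` S \<inter> X = {x. (x, u) \<in> S}"
    using prod_sigma_subset[OF assms(1-3)] by auto
  ultimately show ?thesis by simp
qed

lemma rectangle_in_prod_sigma_iff:
  assumes "sigma_algebra X A" "sigma_algebra U F" "a \<noteq> {}" "e \<noteq> {}"
  shows "a \<times> e \<in> prod_sigma X U A F \<longleftrightarrow> a \<in> A \<and> e \<in> F"
proof
  assume ae: "a \<times> e \<in> prod_sigma X U A F"
  obtain x u where "x \<in> a" "u \<in> e"
    using assms(3,4) by blast
  moreover have "a \<times> e \<subseteq> X \<times> U"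
    using prod_sigma_subset[OF assms(1,2) ae] .
  ultimately have "{x'. (x', u) \<in> a \<times> e} \<in> A" "{u'. (x, u') \<in> a \<times> e} \<in> F"
    using prod_sigma_section_snd[OF assms(1,2) ae] prod_sigma_section_fst[OF assms(1,2) ae]
    by blast+
  with \<open>x \<in> a\<close> \<open>u \<in> e\<close> show "a \<in> A \<and> e \<in> F"
    by simp
next
  assume "a \<in> A \<and> e \<in> F"
  then show "a \<times> e \<in> prod_sigma X U A F"
    unfolding prod_sigma_def by (blast intro: sigma_sets.Basic)
qed

lemma prod_sigma_subset_prod_sigma_Int:
  assumes A: "sigma_algebra X A" and F: "sigma_algebra U F" and G: "sigma_algebra U G"
    and A0: "sigma_algebra X A0" and E: "sigma_algebra U E"
    and incl: "prod_sigma X U A0 E \<subseteq> prod_sigma X U A F \<inter> prod_sigma X U A G"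
  shows "prod_sigma X U A0 E \<subseteq> prod_sigma X U A (F \<inter> G)"
proof -
  have FG: "sigma_algebra (X \<times> U) (prod_sigma X U A (F \<inter> G))"
    using A F G by (intro sigma_algebra_prod_sigma) (auto simp: sigma_algebra_iff2)
  have "a \<times> e \<in> prod_sigma X U A (F \<inter> G)" if "a \<in> A0" "e \<in> E" for a e
  proof (cases "a = {} \<or> e = {}")
    case True
    then show ?thesis
      using sigma_algebra_iff2[THEN iffD1, OF FG] by auto
  next
    case False
    then have ne: "a \<noteq> {}" "e \<noteq> {}"
      by auto
    have "a \<times> e \<in> prod_sigma X U A0 E"
      using that rectangle_in_prod_sigma_iff[OF A0 E ne] by blast
    then have "a \<times> e \<in> prod_sigma X U A F" "a \<times> e \<in> prod_sigma X U A G"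
      using incl by auto
    then show ?thesis
      using rectangle_in_prod_sigma_iff[OF A F ne] rectangle_in_prod_sigma_iff[OF A G ne]
        rectangle_in_prod_sigma_iff[OF A sigma_algebra_Int[OF F G] ne] by blast
  qed
  then show ?thesis
    unfolding prod_sigma_def[of X U A0 E] by (intro sigma_algebra.sigma_sets_subset[OF FG]) blast
qed

theorem lemma2p4:
  fixes X :: "'a set" and U :: "'b set"
    and A :: "'a set set" and F G :: "'b set set"
  assumes "sigma_algebra X A" and "sigma_algebra U F" and "sigma_algebra U G"
  shows "prod_sigma X U A F \<inter> prod_sigma X U A G = prod_sigma X U A (F \<inter> G)
     \<longleftrightarrow> (\<exists>A0 E. sigma_algebra X A0 \<and> sigma_algebra U E \<and>
           prod_sigma X U A F \<inter> prod_sigma X U A G = prod_sigma X U A0 E)"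
proof
  assume "prod_sigma X U A F \<inter> prod_sigma X U A G = prod_sigma X U A (F \<inter> G)"
  then show "\<exists>A0 E. sigma_algebra X A0 \<and> sigma_algebra U E \<and>
           prod_sigma X U A F \<inter> prod_sigma X U A G = prod_sigma X U A0 E"
    using assms sigma_algebra_Int by blast
next
  assume "\<exists>A0 E. sigma_algebra X A0 \<and> sigma_algebra U E \<and>
           prod_sigma X U A F \<inter> prod_sigma X U A G = prod_sigma X U A0 E"
  then obtain A0 E where "sigma_algebra X A0" "sigma_algebra U E"
    and eq: "prod_sigma X U A F \<inter> prod_sigma X U A G = prod_sigma X U A0 E"
    by blast
  then have "prod_sigma X U A0 E \<subseteq> prod_sigma X U A (F \<inter> G)"
    using assms by (intro prod_sigma_subset_prod_sigma_Int) auto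
  moreover have "prod_sigma X U A (F \<inter> G) \<subseteq> prod_sigma X U A F \<inter> prod_sigma X U A G"
    by (intro Int_greatest prod_sigma_mono) auto
  ultimately show "prod_sigma X U A F \<inter> prod_sigma X U A G = prod_sigma X U A (F \<inter> G)"
    using eq by blast
qed

end
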